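(* Let $G$ be a $B_2$-EPG graph given with a representation in which every vertex is a Z-vertex, and let $X$ be a clique of $G$. For rows $a,b$ let $X_{ab}$ be the set of vertices of $X$ with index exactly $\{a,b\}$. If there are two rows $a,b$ such that neither the projection graph of $X_{ab}$ on $a$ nor the projection graph of $X_{ab}$ on $b$ is a clique, then $X$ is contained in (the vertex set of) a good graph of $G$.
   Context: A graph $G$ is a $B_k$-EPG graph if each vertex $u$ can be assigned a path $P_u$ in the planar orthogonal grid with at most $k$ bends such that $uv\in E(G)$ iff $P_u$ and $P_v$ share at least one grid edge (a representation); for $B_2$-EPG graphs one assumes w.l.o.g. every path has exactly two bends. A vertex $u$ intersects a row (column) if $P_u$ contains a grid edge of it; the index of $u$ is the set of rows it intersects. A Z-vertex intersects exactly two rows and one column. If $a$ is in the index of $u$, $P_u^a$ is the segment of row $a$ between the two points of row $a$ where $P_u$ stops or bends. Types: $\emptyset$, $\mathsf d$, $\mathsf u$. A typed interval on row $a$ is $[x\alpha, y\beta]$ with $\alpha\le\beta$ points of row $a$ and $x,y$ types; it is proper if $\alpha\neq\beta$, or $\alpha=\beta$, $x=y$ and $x\in\{\mathsf u,\mathsf d\}$. For typed intervals $t=[x\alpha,y\beta]$, $t'=[x'\alpha',y'\beta']$ on row $a$ and an endpoint $z\gamma\in\{x'\alpha',y'\beta'\}$ of $t'$, $t$ is coherent with $z\gamma$ if (i) $\gamma\in(\alpha,\beta)$ (open interval), or (ii) $z=\emptyset$ and $[\alpha,\beta]$ contains the grid edge of $[\alpha',\beta']$ incident to $\gamma$, or (iii)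 $z\neq\emptyset$ and $z\gamma\in\{x\alpha,y\beta\}$. $t$ contains $t'$ if $[\alpha',\beta']\subseteq[\alpha,\beta]$ and $t$ is coherent with both endpoints of $t'$. $t$ intersects $t'$ if $[\alpha,\beta]\cap[\alpha',\beta']$ contains a grid edge, or $t$ is coherent with an endpoint of $t'$, or $t'$ is coherent with an endpoint of $t$. The t-projection of $u$ on $a$ is $[x\alpha,y\beta]$ where $\alpha,\beta$ are the endpoints of $P_u^a$ and the type of an endpoint $\gamma$ is $\emptyset$ if $P_u$ ends at $\gamma$, $\mathsf d$ if $P_u$ bends downwards at $\gamma$, $\mathsf u$ if upwards. A vertex $u$ contains (intersects) a typed interval $t$ on $a$ if $a$ is in the index of $u$ and its t-projection on $a$ contains (intersects) $t$. The projection graph of a set $Y$ of vertices whose indices contain $a$ is the graph on $Y$ in which $u,v$ are adjacent iff their t-projections on $a$ intersect. A good graph of $G$ is an induced subgraph $H$ of one of the following forms: (I) there are two rows $a,b$ and proper typed intervals $t_a$ on $a$ and $t_b$ on $b$ such that $H$ is induced by all vertices $v$ that contain $t_a$, or contain $t_b$, or intersect both $t_a$ and $t_b$; (II) there are three rows $a,b,c$ and proper typed intervals $t_a,t_b,t_c$ on $a,b,c$ respectively such that $H$ is induced by all vertices $v$ that contain $t_a$, or contain $t_b$, or intersect $t_b$ and contain $t_c$. *)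

theory Defs
  imports Main
begin

text \<open>Grid points are pairs (x, y) of integers; row y is the horizontal line of
  points with second coordinate y, column x the vertical line with first coordinate x.
  "Downwards" means towards smaller y.\<close>

type_synonym point = "int \<times> int"

datatype gedge = HE int int | VE int int
  (* HE x y : edge between (x,y) and (x+1,y);  VE x y : edge between (x,y) and (x,y+1) *)

definition seg_edges :: "point \<Rightarrow> point \<Rightarrow> gedge set" where
  "seg_edges p q =
     (if snd p = snd q then {HE x (snd p) | x. min (fst p) (fst q) \<le> x \<and> x < max (fst p) (fst q)}
      else if fst p = fst q then {VE (fst p) y | y. min (snd p) (snd q) \<le> y \<and> y < max (snd p) (snd q)}
      else {})"

text \<open>A path with exactly two bends, given by its list of corner points
  (start, first bend, second bend, end).\<close>

definition horiz_seg :: "point list \<Rightarrow> nat \<Rightarrow> bool" where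
  "horiz_seg p i = (snd (p ! i) = snd (p ! Suc i))"

definition two_bend_path :: "point list \<Rightarrow> bool" where
  "two_bend_path p =
     (length p = 4 \<and>
      (\<forall>i<3. p ! i \<noteq> p ! Suc i \<and> (fst (p ! i) = fst (p ! Suc i) \<or> snd (p ! i) = snd (p ! Suc i))) \<and>
      (\<forall>i<2. horiz_seg p i \<longleftrightarrow> \<not> horiz_seg p (Suc i)))"

definition path_edges :: "point list \<Rightarrow> gedge set" where
  "path_edges p = (\<Union>i<3. seg_edges (p ! i) (p ! Suc i))"

definition B2_rep :: "'v set \<Rightarrow> ('v \<Rightarrow> 'v \<Rightarrow> bool) \<Rightarrow> ('v \<Rightarrow> point list) \<Rightarrow> bool" where
  "B2_rep V E P =
     ((\<forall>u\<in>V. two_bend_path (P u)) \<and>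
      (\<forall>u\<in>V. \<forall>v\<in>V. u \<noteq> v \<longrightarrow> (E u v \<longleftrightarrow> path_edges (P u) \<inter> path_edges (P v) \<noteq> {})))"

definition is_clique :: "'v set \<Rightarrow> ('v \<Rightarrow> 'v \<Rightarrow> bool) \<Rightarrow> 'v set \<Rightarrow> bool" where
  "is_clique V E X = (X \<subseteq> V \<and> (\<forall>u\<in>X. \<forall>v\<in>X. u \<noteq> v \<longrightarrow> E u v))"

definition index :: "point list \<Rightarrow> int set" where
  "index p = {snd (p ! i) | i. i < 3 \<and> horiz_seg p i}"

definition columns :: "point list \<Rightarrow> int set" where
  "columns p = {fst (p ! i) | i. i < 3 \<and> \<not> horiz_seg p i}"

definition Z_vertex :: "point list \<Rightarrow> bool" where
  "Z_vertex p = (card (index p) = 2 \<and> card (columns p) = 1)"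

text \<open>Types and typed intervals (x, alpha, y, beta), meaning [x alpha, y beta].\<close>

datatype etype = Emp | Dn | Up

type_synonym tint = "etype \<times> int \<times> etype \<times> int"

definition typed_interval :: "tint \<Rightarrow> bool" where
  "typed_interval t = (case t of (x, \<alpha>, y, \<beta>) \<Rightarrow> \<alpha> \<le> \<beta>)"

definition proper :: "tint \<Rightarrow> bool" where
  "proper t = (case t of (x, \<alpha>, y, \<beta>) \<Rightarrow>
      \<alpha> \<le> \<beta> \<and> (\<alpha> \<noteq> \<beta> \<or> (\<alpha> = \<beta> \<and> x = y \<and> x \<in> {Up, Dn})))"

text \<open>Coherence of t with the left (L = True) or right (L = False) endpoint of t'.
  The grid edge of [alpha', beta'] incident to the left endpoint is [alpha', alpha'+1],
  the one incident to the right endpoint is [beta'-1, beta'].\<close>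

definition coherent :: "tint \<Rightarrow> tint \<Rightarrow> bool \<Rightarrow> bool" where
  "coherent t t' L = (case t of (x, \<alpha>, y, \<beta>) \<Rightarrow> case t' of (x', \<alpha>', y', \<beta>') \<Rightarrow>
      (let z = (if L then x' else y'); \<gamma> = (if L then \<alpha>' else \<beta>');
           e = (if L then \<alpha>' else \<beta>' - 1)
       in (\<alpha> < \<gamma> \<and> \<gamma> < \<beta>)
          \<or> (z = Emp \<and> \<alpha> \<le> e \<and> e + 1 \<le> \<beta>)
          \<or> (z \<noteq> Emp \<and> ((z, \<gamma>) = (x, \<alpha>) \<or> (z, \<gamma>) = (y, \<beta>)))))"

definition tcontains :: "tint \<Rightarrow> tint \<Rightarrow> bool" where
  "tcontains t t' = (case t of (x, \<alpha>, y, \<beta>) \<Rightarrow> case t' of (x', \<alpha>', y', \<beta>') \<Rightarrow>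
      \<alpha> \<le> \<alpha>' \<and> \<beta>' \<le> \<beta> \<and> coherent t t' True \<and> coherent t t' False)"

definition tintersects :: "tint \<Rightarrow> tint \<Rightarrow> bool" where
  "tintersects t t' = (case t of (x, \<alpha>, y, \<beta>) \<Rightarrow> case t' of (x', \<alpha>', y', \<beta>') \<Rightarrow>
      max \<alpha> \<alpha>' < min \<beta> \<beta>'
      \<or> coherent t t' True \<or> coherent t t' False
      \<or> coherent t' t True \<or> coherent t' t False)"

definition bend_type :: "int \<Rightarrow> int \<Rightarrow> etype" where
  "bend_type a other = (if other < a then Dn else Up)"

definition mk_tint :: "etype \<Rightarrow> int \<Rightarrow> etype \<Rightarrow> int \<Rightarrow> tint" where
  "mk_tint x \<alpha> y \<beta> = (if \<alpha> \<le> \<beta> then (x, \<alpha>, y, \<beta>) else (y, \<beta>, x, \<alpha>))"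

definition seg_tproj :: "point list \<Rightarrow> nat \<Rightarrow> tint" where
  "seg_tproj p i =
     (let a = snd (p ! i);
          tl = (if i = 0 then Emp else bend_type a (snd (p ! (i - 1))));
          tr = (if Suc i = 3 then Emp else bend_type a (snd (p ! (i + 2))))
      in mk_tint tl (fst (p ! i)) tr (fst (p ! Suc i)))"

definition tproj :: "point list \<Rightarrow> int \<Rightarrow> tint" where
  "tproj p a = seg_tproj p (THE i. i < 3 \<and> horiz_seg p i \<and> snd (p ! i) = a)"

definition vcontains :: "('v \<Rightarrow> point list) \<Rightarrow> 'v \<Rightarrow> int \<Rightarrow> tint \<Rightarrow> bool" where
  "vcontains P u a t = (a \<in> index (P u) \<and> tcontains (tproj (P u) a) t)"

definition vintersects :: "('v \<Rightarrow> point list) \<Rightarrow> 'v \<Rightarrow> int \<Rightarrow> tint \<Rightarrow> bool" where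
  "vintersects P u a t = (a \<in> index (P u) \<and> tintersects (tproj (P u) a) t)"

definition proj_graph_clique :: "('v \<Rightarrow> point list) \<Rightarrow> int \<Rightarrow> 'v set \<Rightarrow> bool" where
  "proj_graph_clique P a Y =
     (\<forall>u\<in>Y. \<forall>v\<in>Y. u \<noteq> v \<longrightarrow> tintersects (tproj (P u) a) (tproj (P v) a))"

definition good_vertex_set :: "'v set \<Rightarrow> ('v \<Rightarrow> point list) \<Rightarrow> 'v set \<Rightarrow> bool" where
  "good_vertex_set V P S =
     ((\<exists>a b ta tb. a \<noteq> b \<and> proper ta \<and> proper tb \<and>
         S = {v \<in> V. vcontains P v a ta \<or> vcontains P v b tb \<or>
                     (vintersects P v a ta \<and> vintersects P v b tb)})
      \<or>
      (\<exists>a b c ta tb tc. distinct [a, b, c] \<and> proper ta \<and> proper tb \<and> proper tc \<and>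
         S = {v \<in> V. vcontains P v a ta \<or> vcontains P v b tb \<or>
                     (vintersects P v b tb \<and> vcontains P v c tc)}))"

end

theory Submission
  imports Defs
begin

text \<open>Pick u, v in X with index {a, b} whose t-projections on row a do not intersect: their arms
  on row a are disjoint and lie in different columns. Every vertex of X meets both, which is only
  possible through row a or row b (vertical edges alone would put u and v in one column). A vertex
  of X whose index contains a but not b meets the arms of u and v on row a by overlapping them or by
  sharing their column and bend direction, so all such arms span the gap between u and v. Their
  intersection, typed by the common bend direction where arms merely touch, is a proper typed
  interval contained in all of them and meeting every arm of a vertex with index {a, b}. Doing the
  same on row b gives a good graph of the first kind containing X.\<close>

lemma length_4_conv_nth: "length p = 4 \<Longrightarrow> p = [p!0, p!1, p!2, p!3]"
  by (rule nth_equalityI) (auto simp: less_Suc_eq numeral_eq_Suc nth_Cons')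

lemma less_3_cases: "(i::nat) < 3 \<longleftrightarrow> i = 0 \<or> i = 1 \<or> i = 2"
  by auto

lemma Z_vertex_path_shape:
  assumes "two_bend_path p" "Z_vertex p"
  obtains x0 y1 c y2 x3 where "p = [(x0,y1), (c,y1), (c,y2), (x3,y2)]" "x0 \<noteq> c" "x3 \<noteq> c" "y1 \<noteq> y2"
proof -
  have "length p = 4" using assms(1) unfolding two_bend_path_def by auto
  then obtain x0 y0 x1 y1 x2 y2 x3 y3 where p: "p = [(x0,y0), (x1,y1), (x2,y2), (x3,y3)]"
    using length_4_conv_nth by (metis surj_pair)
  have segs: "\<forall>i<3. p ! i \<noteq> p ! Suc i \<and> (fst (p ! i) = fst (p ! Suc i) \<or> snd (p ! i) = snd (p ! Suc i))"
   and alternate: "\<forall>i<2. horiz_seg p i \<longleftrightarrow> \<not> horiz_seg p (Suc i)"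
    using assms(1) unfolding two_bend_path_def by auto
  have s0: "(x0,y0) \<noteq> (x1,y1) \<and> (x0 = x1 \<or> y0 = y1)" using segs[rule_format, of 0] by (simp add: p)
  have s1: "(x1,y1) \<noteq> (x2,y2) \<and> (x1 = x2 \<or> y1 = y2)" using segs[rule_format, of 1] by (simp add: p)
  have s2: "(x2,y2) \<noteq> (x3,y3) \<and> (x2 = x3 \<or> y2 = y3)"
    using segs[rule_format, of 2] by (simp add: p numeral_eq_Suc)
  have a0: "y0 = y1 \<longleftrightarrow> y1 \<noteq> y2" using alternate[rule_format, of 0] by (auto simp: p horiz_seg_def)
  have a1: "y1 = y2 \<longleftrightarrow> y2 \<noteq> y3"
    using alternate[rule_format, of 1] by (auto simp: p horiz_seg_def numeral_eq_Suc)
  have index_p: "index p = {snd (p!i) | i. i = 0 \<and> horiz_seg p 0 \<or> i = 1 \<and> horiz_seg p 1 \<or> i = 2 \<and> horiz_seg p 2}"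
    unfolding index_def less_3_cases by blast
  have first_horizontal: "y0 = y1"
  proof (rule ccontr)
    assume "y0 \<noteq> y1"
    then have "index p = {y1}" unfolding index_p using a0 a1 by (auto simp: p horiz_seg_def numeral_eq_Suc)
    then show False using assms(2) unfolding Z_vertex_def by simp
  qed
  show thesis using that first_horizontal s0 s1 s2 a0 a1 p by auto
qed

lemma Z_shaped_path:
  assumes p: "p = [(x0,y1), (c,y1), (c,y2), (x3,y2)]" and "x0 \<noteq> c" "x3 \<noteq> c" "y1 \<noteq> y2"
  shows "index p = {y1,y2}"
    and "tproj p y1 = mk_tint Emp x0 (bend_type y1 y2) c"
    and "tproj p y2 = mk_tint Emp x3 (bend_type y2 y1) c"
    and "HE z r \<in> path_edges p \<longleftrightarrow>
           (r = y1 \<and> min x0 c \<le> z \<and> z < max x0 c) \<or> (r = y2 \<and> min x3 c \<le> z \<and> z < max x3 c)"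
    and "VE z y \<in> path_edges p \<longleftrightarrow> z = c \<and> min y1 y2 \<le> y \<and> y < max y1 y2"
proof -
  have horiz: "horiz_seg p 0" "\<not> horiz_seg p 1" "horiz_seg p 2"
    using assms by (auto simp: horiz_seg_def numeral_eq_Suc)
  show "index p = {y1,y2}" unfolding index_def less_3_cases using horiz
    by (auto simp: p numeral_eq_Suc intro: exI[where x=0] exI[where x="Suc (Suc 0)"])
  have "(THE i. i < 3 \<and> horiz_seg p i \<and> snd (p ! i) = y1) = 0"
  proof (rule the_equality)
    fix i assume "i < 3 \<and> horiz_seg p i \<and> snd (p ! i) = y1"
    then show "i = 0" using horiz assms by (auto simp: p less_3_cases)
  qed (use horiz in \<open>simp add: p\<close>)
  then show "tproj p y1 = mk_tint Emp x0 (bend_type y1 y2) c"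
    unfolding tproj_def seg_tproj_def by (simp add: p numeral_eq_Suc)
  have "(THE i. i < 3 \<and> horiz_seg p i \<and> snd (p ! i) = y2) = 2"
  proof (rule the_equality)
    fix i assume "i < 3 \<and> horiz_seg p i \<and> snd (p ! i) = y2"
    then show "i = 2" using horiz assms by (auto simp: p less_3_cases)
  qed (use horiz in \<open>simp add: p numeral_2_eq_2\<close>)
  then show "tproj p y2 = mk_tint Emp x3 (bend_type y2 y1) c"
    unfolding tproj_def seg_tproj_def using assms by (simp add: p numeral_eq_Suc mk_tint_def)
  have edges: "path_edges p = seg_edges (x0,y1) (c,y1) \<union> seg_edges (c,y1) (c,y2) \<union> seg_edges (c,y2) (x3,y2)"
    proof -
    have "{..<(3::nat)} = {0, 1, 2}" by auto
    then show ?thesis unfolding path_edges_def by (simp add: p numeral_2_eq_2 Un_ac)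
  qed
  show "HE z r \<in> path_edges p \<longleftrightarrow>
          (r = y1 \<and> min x0 c \<le> z \<and> z < max x0 c) \<or> (r = y2 \<and> min x3 c \<le> z \<and> z < max x3 c)"
    "VE z y \<in> path_edges p \<longleftrightarrow> z = c \<and> min y1 y2 \<le> y \<and> y < max y1 y2"
    unfolding edges seg_edges_def using assms by auto
qed

text \<open>For a Z-shaped path and a row r of its index, the arm on row r runs from z_arm_end p r to
  the column z_column p, where the path turns towards row z_other_row p r.\<close>

definition z_column :: "point list \<Rightarrow> int" where
  "z_column p = fst (p ! 1)"

definition z_arm_end :: "point list \<Rightarrow> int \<Rightarrow> int" where
  "z_arm_end p r = (if r = snd (p ! 0) then fst (p ! 0) else fst (p ! 3))"

definition z_other_row :: "point list \<Rightarrow> int \<Rightarrow> int" where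
  "z_other_row p r = (if r = snd (p ! 0) then snd (p ! 2) else snd (p ! 0))"

lemma Z_vertex_arm:
  assumes "two_bend_path p" "Z_vertex p" "r \<in> index p"
  shows "index p = {r, z_other_row p r}" "z_other_row p r \<noteq> r" "z_arm_end p r \<noteq> z_column p"
    "tproj p r = mk_tint Emp (z_arm_end p r) (bend_type r (z_other_row p r)) (z_column p)"
    "VE z y \<in> path_edges p \<longleftrightarrow>
       z = z_column p \<and> min r (z_other_row p r) \<le> y \<and> y < max r (z_other_row p r)"
proof -
  obtain x0 y1 c y2 x3 where p: "p = [(x0,y1), (c,y1), (c,y2), (x3,y2)]" and "x0 \<noteq> c" "x3 \<noteq> c" "y1 \<noteq> y2"
    using Z_vertex_path_shape[OF assms(1,2)] by blast
  moreover note Z_shaped_path[OF this]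
  moreover have "r = y1 \<or> r = y2" using assms(3) calculation by auto
  ultimately show "index p = {r, z_other_row p r}" "z_other_row p r \<noteq> r" "z_arm_end p r \<noteq> z_column p"
    "tproj p r = mk_tint Emp (z_arm_end p r) (bend_type r (z_other_row p r)) (z_column p)"
    "VE z y \<in> path_edges p \<longleftrightarrow>
       z = z_column p \<and> min r (z_other_row p r) \<le> y \<and> y < max r (z_other_row p r)"
    by (auto simp: z_column_def z_arm_end_def z_other_row_def numeral_eq_Suc)
qed

lemma Z_vertex_HE_in_path_edges:
  assumes "two_bend_path p" "Z_vertex p"
  shows "HE z r \<in> path_edges p \<longleftrightarrow>
    r \<in> index p \<and> min (z_arm_end p r) (z_column p) \<le> z \<and> z < max (z_arm_end p r) (z_column p)"
proof -
  obtain x0 y1 c y2 x3 where p: "p = [(x0,y1), (c,y1), (c,y2), (x3,y2)]" and "x0 \<noteq> c" "x3 \<noteq> c" "y1 \<noteq> y2"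
    using Z_vertex_path_shape[OF assms] by blast
  with Z_shaped_path[OF this] show ?thesis
    by (auto simp: z_column_def z_arm_end_def numeral_eq_Suc)
qed

definition arms_overlap :: "int \<Rightarrow> int \<Rightarrow> int \<Rightarrow> int \<Rightarrow> bool" where
  "arms_overlap f c f' c' \<longleftrightarrow> max (min f c) (min f' c') < min (max f c) (max f' c')"

lemma Z_vertices_share_edge:
  assumes "two_bend_path p" "Z_vertex p" "two_bend_path q" "Z_vertex q"
    and "path_edges p \<inter> path_edges q \<noteq> {}"
  shows "(\<exists>r \<in> index p \<inter> index q.
            arms_overlap (z_arm_end p r) (z_column p) (z_arm_end q r) (z_column q))
       \<or> (z_column p = z_column q \<and>
          (\<forall>r \<in> index p \<inter> index q. bend_type r (z_other_row p r) = bend_type r (z_other_row q r)))"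
proof -
  obtain e where e: "e \<in> path_edges p" "e \<in> path_edges q" using assms(5) by blast
  show ?thesis
  proof (cases e)
    case (HE z r)
    then have "r \<in> index p \<inter> index q" "arms_overlap (z_arm_end p r) (z_column p) (z_arm_end q r) (z_column q)"
      using e Z_vertex_HE_in_path_edges[OF assms(1,2)] Z_vertex_HE_in_path_edges[OF assms(3,4)]
      unfolding arms_overlap_def by auto
    then show ?thesis by blast
  next
    case (VE z y)
    obtain r where r: "r \<in> index p" using assms(2) unfolding Z_vertex_def by fastforce
    obtain s where s: "s \<in> index q" using assms(4) unfolding Z_vertex_def by fastforce
    have "z_column p = z_column q"
      using e VE Z_vertex_arm(5)[OF assms(1,2) r] Z_vertex_arm(5)[OF assms(3,4) s] by auto
    moreover have "bend_type r (z_other_row p r) = bend_type r (z_other_row q r)"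
      if "r \<in> index p" "r \<in> index q" for r
    proof -
      have "min r (z_other_row p r) \<le> y \<and> y < max r (z_other_row p r)"
        "min r (z_other_row q r) \<le> y \<and> y < max r (z_other_row q r)"
        using e VE Z_vertex_arm(5)[OF assms(1,2) that(1)] Z_vertex_arm(5)[OF assms(3,4) that(2)] by auto
      then show ?thesis
        using Z_vertex_arm(2)[OF assms(1,2) that(1)] Z_vertex_arm(2)[OF assms(3,4) that(2)]
        unfolding bend_type_def by (auto split: if_splits)
    qed
    ultimately show ?thesis by blast
  qed
qed

lemma mk_tint_arm: "f \<noteq> c \<Longrightarrow> mk_tint Emp f t c = (if f < c then (Emp, f, t, c) else (t, c, Emp, f))"
  unfolding mk_tint_def by auto

lemma tintersects_arms_same_column:
  "f \<noteq> c \<Longrightarrow> f' \<noteq> c \<Longrightarrow> t \<noteq> Emp \<Longrightarrow> tintersects (mk_tint Emp f t c) (mk_tint Emp f' t c)"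
  unfolding mk_tint_arm tintersects_def coherent_def by (auto simp: Let_def)

lemma tintersects_overlapping_arms:
  "f \<noteq> c \<Longrightarrow> f' \<noteq> c' \<Longrightarrow> arms_overlap f c f' c' \<Longrightarrow> tintersects (mk_tint Emp f t c) (mk_tint Emp f' t' c')"
  unfolding mk_tint_arm tintersects_def arms_overlap_def by auto

lemma tcontains_arm:
  fixes f c \<alpha> \<beta> :: int
  assumes "f \<noteq> c" "\<tau> \<noteq> Emp" "min f c \<le> \<alpha>" "\<beta> \<le> max f c"
    and "\<alpha> < \<beta> \<or> (\<alpha> = \<beta> \<and> xL = \<tau> \<and> xR = \<tau>)" "xL = \<tau> \<or> xL = Emp" "xR = \<tau> \<or> xR = Emp"
    and "min f c = \<alpha> \<and> xL = \<tau> \<longrightarrow> c < f \<and> t = \<tau>"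
    and "max f c = \<beta> \<and> xR = \<tau> \<longrightarrow> f < c \<and> t = \<tau>"
    and "\<alpha> = max f c \<longrightarrow> f < c \<and> t = \<tau>"
    and "\<beta> = min f c \<longrightarrow> c < f \<and> t = \<tau>"
  shows "tcontains (mk_tint Emp f t c) (xL, \<alpha>, xR, \<beta>)"
proof (cases "f < c")
  case True
  then have "mk_tint Emp f t c = (Emp, f, t, c)" using mk_tint_arm[OF assms(1)] by simp
  then show ?thesis unfolding tcontains_def coherent_def Let_def
    apply simp
    using assms True by (smt (verit))
next
  case False
  then have "mk_tint Emp f t c = (t, c, Emp, f)" using mk_tint_arm[OF assms(1)] by simp
  then show ?thesis unfolding tcontains_def coherent_def Let_def
    apply simp
    using assms False by (smt (verit))
qed

lemma tintersects_arm:
  fixes f c \<alpha> \<beta> :: int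
  assumes "f \<noteq> c" "\<tau> \<noteq> Emp" "\<alpha> < \<beta> \<or> (\<alpha> = \<beta> \<and> xL = \<tau> \<and> xR = \<tau>)"
    and "max f c \<le> \<alpha> \<longrightarrow> f < c \<and> max f c = \<alpha> \<and> xL = \<tau>"
    and "\<beta> \<le> min f c \<longrightarrow> c < f \<and> min f c = \<beta> \<and> xR = \<tau>"
  shows "tintersects (mk_tint Emp f \<tau> c) (xL, \<alpha>, xR, \<beta>)"
proof (cases "f < c")
  case True
  then have "mk_tint Emp f \<tau> c = (Emp, f, \<tau>, c)" using mk_tint_arm[OF assms(1)] by simp
  then show ?thesis unfolding tintersects_def coherent_def Let_def
    apply simp
    using assms True by (smt (verit))
next
  case False
  then have "mk_tint Emp f \<tau> c = (\<tau>, c, Emp, f)" using mk_tint_arm[OF assms(1)] by simp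
  then show ?thesis unfolding tintersects_def coherent_def Let_def
    apply simp
    using assms False by (smt (verit))
qed

text \<open>An arm meeting each of two disjoint arms in different columns, by overlap or by a bend of
  type \<tau> in the same column, spans the gap between them; two such arms overlap or touch at
  bends of type \<tau>.\<close>

lemma arms_spanning_gap:
  fixes f\<^sub>1 c\<^sub>1 f\<^sub>2 c\<^sub>2 f c f' c' :: int
  assumes "f\<^sub>1 \<noteq> c\<^sub>1" "f\<^sub>2 \<noteq> c\<^sub>2" "c\<^sub>1 \<noteq> c\<^sub>2" "f \<noteq> c" "f' \<noteq> c'"
    and "\<not> arms_overlap f\<^sub>1 c\<^sub>1 f\<^sub>2 c\<^sub>2"
    and "arms_overlap f c f\<^sub>1 c\<^sub>1 \<or> (c = c\<^sub>1 \<and> t = \<tau>)" "arms_overlap f c f\<^sub>2 c\<^sub>2 \<or> (c = c\<^sub>2 \<and> t = \<tau>)"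
    and "arms_overlap f' c' f\<^sub>1 c\<^sub>1 \<or> (c' = c\<^sub>1 \<and> t' = \<tau>)" "arms_overlap f' c' f\<^sub>2 c\<^sub>2 \<or> (c' = c\<^sub>2 \<and> t' = \<tau>)"
  shows "min f c < max f' c' \<or> (min f c = max f' c' \<and> c < f \<and> t = \<tau> \<and> f' < c' \<and> t' = \<tau>)"
  using assms unfolding arms_overlap_def by (smt (verit))

text \<open>Arms on a fixed row a: the arm of w runs from F w to column C w and bends with type T w.
  W collects vertices whose index contains a but not b, Y those with index {a, b}, which all bend
  towards b (type \<tau>); u and v are the two Y-arms with non-intersecting projections.\<close>

locale row_arms =
  fixes W Y :: "'v set" and F C :: "'v \<Rightarrow> int" and T :: "'v \<Rightarrow> etype" and \<tau> :: etype and u v :: 'v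
  assumes finite_arms: "finite (W \<union> Y)"
    and u_in_Y: "u \<in> Y" and v_in_Y: "v \<in> Y"
    and columns_differ: "C u \<noteq> C v"
    and arms_disjoint: "\<not> arms_overlap (F u) (C u) (F v) (C v)"
    and arm_nondegenerate: "w \<in> W \<union> Y \<Longrightarrow> F w \<noteq> C w"
    and \<tau>_not_Emp: "\<tau> \<noteq> Emp"
    and type_Y: "y \<in> Y \<Longrightarrow> T y = \<tau>"
    and meets: "w \<in> W \<Longrightarrow> y \<in> Y \<Longrightarrow> arms_overlap (F w) (C w) (F y) (C y) \<or> (C w = C y \<and> T w = \<tau>)"
begin

definition arm_lo :: "'v \<Rightarrow> int" where
  "arm_lo w = min (F w) (C w)"

definition arm_hi :: "'v \<Rightarrow> int" where
  "arm_hi w = max (F w) (C w)"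

text \<open>Sentinels keeping left_end and right_end meaningful when W is empty.\<close>

definition left_bound :: int where
  "left_bound = Min (arm_lo ` (W \<union> Y)) - 1"

definition right_bound :: int where
  "right_bound = Max (arm_hi ` (W \<union> Y)) + 1"

definition left_end :: int where
  "left_end = Max (insert left_bound (arm_lo ` W))"

definition right_end :: int where
  "right_end = Min (insert right_bound (arm_hi ` W))"

definition left_type :: etype where
  "left_type = (if \<forall>w\<in>W. arm_lo w = left_end \<longrightarrow> C w < F w \<and> T w = \<tau> then \<tau> else Emp)"

definition right_type :: etype where
  "right_type = (if \<forall>w\<in>W. arm_hi w = right_end \<longrightarrow> F w < C w \<and> T w = \<tau> then \<tau> else Emp)"

definition common_tint :: tint where
  "common_tint = (left_type, left_end, right_type, right_end)"

lemma arm_bounds: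
  assumes "w \<in> W \<union> Y"
  shows "left_bound < arm_lo w" "arm_lo w < arm_hi w" "arm_hi w < right_bound"
proof -
  have "Min (arm_lo ` (W \<union> Y)) \<le> arm_lo w" using assms finite_arms by (intro Min_le) auto
  then show "left_bound < arm_lo w" unfolding left_bound_def by simp
  have "arm_hi w \<le> Max (arm_hi ` (W \<union> Y))" using assms finite_arms by (intro Max_ge) auto
  then show "arm_hi w < right_bound" unfolding right_bound_def by simp
  show "arm_lo w < arm_hi w" using arm_nondegenerate[OF assms] unfolding arm_lo_def arm_hi_def by auto
qed

lemma finite_W: "finite W"
  using finite_arms by simp

lemma arm_lo_le_left_end: "w \<in> W \<Longrightarrow> arm_lo w \<le> left_end"
  unfolding left_end_def using finite_W by simp

lemma right_end_le_arm_hi: "w \<in> W \<Longrightarrow> right_end \<le> arm_hi w"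
  unfolding right_end_def using finite_W by simp

lemma left_end_cases: "left_end = left_bound \<or> (\<exists>w\<in>W. left_end = arm_lo w)"
proof -
  have "left_end \<in> insert left_bound (arm_lo ` W)" unfolding left_end_def using finite_W by (intro Max_in) auto
  then show ?thesis by auto
qed

lemma right_end_cases: "right_end = right_bound \<or> (\<exists>w\<in>W. right_end = arm_hi w)"
proof -
  have "right_end \<in> insert right_bound (arm_hi ` W)" unfolding right_end_def using finite_W by (intro Min_in) auto
  then show ?thesis by auto
qed

lemma left_type_cases: "left_type = \<tau> \<or> left_type = Emp"
  unfolding left_type_def by simp

lemma right_type_cases: "right_type = \<tau> \<or> right_type = Emp"
  unfolding right_type_def by simp

lemma left_type_eq_\<tau>_iff: "left_type = \<tau> \<longleftrightarrow> (\<forall>w\<in>W. arm_lo w = left_end \<longrightarrow> C w < F w \<and> T w = \<tau>)"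
  unfolding left_type_def using \<tau>_not_Emp by auto

lemma right_type_eq_\<tau>_iff: "right_type = \<tau> \<longleftrightarrow> (\<forall>w\<in>W. arm_hi w = right_end \<longrightarrow> F w < C w \<and> T w = \<tau>)"
  unfolding right_type_def using \<tau>_not_Emp by auto

lemma W_arms_reach_across:
  assumes "w \<in> W" "w' \<in> W"
  shows "arm_lo w < arm_hi w' \<or>
    (arm_lo w = arm_hi w' \<and> C w < F w \<and> T w = \<tau> \<and> F w' < C w' \<and> T w' = \<tau>)"
  unfolding arm_lo_def arm_hi_def
  using arms_spanning_gap[OF arm_nondegenerate arm_nondegenerate columns_differ
      arm_nondegenerate arm_nondegenerate arms_disjoint
      meets[OF assms(1) u_in_Y] meets[OF assms(1) v_in_Y] meets[OF assms(2) u_in_Y] meets[OF assms(2) v_in_Y]]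
    assms u_in_Y v_in_Y by blast

lemma ends_ordered: "left_end < right_end \<or> (left_end = right_end \<and> left_type = \<tau> \<and> right_type = \<tau>)"
proof (cases "left_end = left_bound")
  case True
  from right_end_cases show ?thesis
  proof
    assume "right_end = right_bound"
    then show ?thesis using True arm_bounds[of u] u_in_Y by simp
  next
    assume "\<exists>w\<in>W. right_end = arm_hi w"
    then show ?thesis using True arm_bounds by fastforce
  qed
next
  case False
  then obtain w\<^sub>L where w\<^sub>L: "w\<^sub>L \<in> W" "left_end = arm_lo w\<^sub>L" using left_end_cases by blast
  from right_end_cases show ?thesis
  proof
    assume "right_end = right_bound"
    then show ?thesis using w\<^sub>L arm_bounds[of w\<^sub>L] by simp
  next
    assume "\<exists>w\<in>W. right_end = arm_hi w"
    then obtain w\<^sub>R where w\<^sub>R: "w\<^sub>R \<in> W" "right_end = arm_hi w\<^sub>R" by blast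
    show ?thesis
    proof (cases "left_end < right_end")
      case False
      then have ends_eq: "left_end = right_end" using W_arms_reach_across[OF w\<^sub>L(1) w\<^sub>R(1)] w\<^sub>L w\<^sub>R by auto
      have "left_type = \<tau>" unfolding left_type_eq_\<tau>_iff
        using W_arms_reach_across[OF _ w\<^sub>R(1)] w\<^sub>R ends_eq by fastforce
      moreover have "right_type = \<tau>" unfolding right_type_eq_\<tau>_iff
        using W_arms_reach_across[OF w\<^sub>L(1)] w\<^sub>L ends_eq by fastforce
      ultimately show ?thesis using ends_eq by simp
    qed simp
  qed
qed

lemma proper_common_tint: "proper common_tint"
  unfolding common_tint_def proper_def using ends_ordered \<tau>_not_Emp by (cases \<tau>) auto

lemma contains_common_tint:
  assumes "w \<in> W"
  shows "tcontains (mk_tint Emp (F w) (T w) (C w)) common_tint"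
  unfolding common_tint_def
proof (rule tcontains_arm[OF arm_nondegenerate \<tau>_not_Emp])
  show "w \<in> W \<union> Y" using assms by simp
  show "min (F w) (C w) \<le> left_end" "right_end \<le> max (F w) (C w)"
    using arm_lo_le_left_end[OF assms] right_end_le_arm_hi[OF assms] unfolding arm_lo_def arm_hi_def by auto
  show "left_end < right_end \<or> left_end = right_end \<and> left_type = \<tau> \<and> right_type = \<tau>"
    by (rule ends_ordered)
  show "left_type = \<tau> \<or> left_type = Emp" "right_type = \<tau> \<or> right_type = Emp"
    by (rule left_type_cases, rule right_type_cases)
  show "min (F w) (C w) = left_end \<and> left_type = \<tau> \<longrightarrow> C w < F w \<and> T w = \<tau>"
    using left_type_eq_\<tau>_iff assms unfolding arm_lo_def by auto
  show "max (F w) (C w) = right_end \<and> right_type = \<tau> \<longrightarrow> F w < C w \<and> T w = \<tau>"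
    using right_type_eq_\<tau>_iff assms unfolding arm_hi_def by auto
  show "left_end = max (F w) (C w) \<longrightarrow> F w < C w \<and> T w = \<tau>"
  proof
    assume "left_end = max (F w) (C w)"
    then have "arm_hi w = right_end" "right_type = \<tau>"
      using ends_ordered right_end_le_arm_hi[OF assms] unfolding arm_hi_def by auto
    then show "F w < C w \<and> T w = \<tau>" using right_type_eq_\<tau>_iff assms by blast
  qed
  show "right_end = min (F w) (C w) \<longrightarrow> C w < F w \<and> T w = \<tau>"
  proof
    assume "right_end = min (F w) (C w)"
    then have "arm_lo w = left_end" "left_type = \<tau>"
      using ends_ordered arm_lo_le_left_end[OF assms] unfolding arm_lo_def by auto
    then show "C w < F w \<and> T w = \<tau>" using left_type_eq_\<tau>_iff assms by blast
  qed
qed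

text \<open>A Y-arm lying entirely left of the common interval must share its column, and the bend
  type, with every W-arm starting at the left end; so it just touches the interval in a bend.\<close>

lemma Y_arm_left_of_left_end:
  assumes y: "y \<in> Y" and left: "arm_hi y \<le> left_end"
  shows "F y < C y \<and> arm_hi y = left_end \<and> left_type = \<tau>"
proof -
  have "left_end \<noteq> left_bound" using arm_bounds[of y] y left by auto
  then obtain w\<^sub>0 where w\<^sub>0: "w\<^sub>0 \<in> W" "left_end = arm_lo w\<^sub>0" using left_end_cases by blast
  have shared: "C w = C y \<and> T w = \<tau>" if "w \<in> W" "arm_lo w = left_end" for w
    using meets[OF that(1) y] left that(2) unfolding arms_overlap_def arm_lo_def arm_hi_def by auto
  have column: "C y = left_end" "arm_hi y = left_end"
    using shared[OF w\<^sub>0(1) w\<^sub>0(2)[symmetric]] w\<^sub>0(2) left unfolding arm_lo_def arm_hi_def by linarith+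
  have "left_type = \<tau>" unfolding left_type_eq_\<tau>_iff
  proof (intro ballI impI)
    fix w assume w: "w \<in> W" "arm_lo w = left_end"
    have "F w \<noteq> C w" using arm_nondegenerate w(1) by simp
    then show "C w < F w \<and> T w = \<tau>" using shared[OF w] column w(2) unfolding arm_lo_def by linarith
  qed
  moreover have "F y \<noteq> C y" using arm_nondegenerate y by simp
  ultimately show ?thesis using column unfolding arm_hi_def by linarith
qed

lemma Y_arm_right_of_right_end:
  assumes y: "y \<in> Y" and right: "right_end \<le> arm_lo y"
  shows "C y < F y \<and> arm_lo y = right_end \<and> right_type = \<tau>"
proof -
  have "right_end \<noteq> right_bound" using arm_bounds[of y] y right by auto
  then obtain w\<^sub>0 where w\<^sub>0: "w\<^sub>0 \<in> W" "right_end = arm_hi w\<^sub>0" using right_end_cases by blast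
  have shared: "C w = C y \<and> T w = \<tau>" if "w \<in> W" "arm_hi w = right_end" for w
    using meets[OF that(1) y] right that(2) unfolding arms_overlap_def arm_lo_def arm_hi_def by auto
  have column: "C y = right_end" "arm_lo y = right_end"
    using shared[OF w\<^sub>0(1) w\<^sub>0(2)[symmetric]] w\<^sub>0(2) right unfolding arm_lo_def arm_hi_def by linarith+
  have "right_type = \<tau>" unfolding right_type_eq_\<tau>_iff
  proof (intro ballI impI)
    fix w assume w: "w \<in> W" "arm_hi w = right_end"
    have "F w \<noteq> C w" using arm_nondegenerate w(1) by simp
    then show "F w < C w \<and> T w = \<tau>" using shared[OF w] column w(2) unfolding arm_hi_def by linarith
  qed
  moreover have "F y \<noteq> C y" using arm_nondegenerate y by simp
  ultimately show ?thesis using column unfolding arm_lo_def by linarith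
qed

lemma intersects_common_tint:
  assumes "y \<in> Y"
  shows "tintersects (mk_tint Emp (F y) \<tau> (C y)) common_tint"
  unfolding common_tint_def
proof (rule tintersects_arm[OF arm_nondegenerate \<tau>_not_Emp ends_ordered])
  show "y \<in> W \<union> Y" using assms by simp
  show "max (F y) (C y) \<le> left_end \<longrightarrow> F y < C y \<and> max (F y) (C y) = left_end \<and> left_type = \<tau>"
    using Y_arm_left_of_left_end[OF assms] unfolding arm_hi_def by blast
  show "right_end \<le> min (F y) (C y) \<longrightarrow> C y < F y \<and> min (F y) (C y) = right_end \<and> right_type = \<tau>"
    using Y_arm_right_of_right_end[OF assms] unfolding arm_lo_def by blast
qed

end

locale Z_clique =
  fixes V :: "'v set" and E :: "'v \<Rightarrow> 'v \<Rightarrow> bool" and P :: "'v \<Rightarrow> point list" and X :: "'v set"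
  assumes finite_V: "finite V" and rep: "B2_rep V E P" and Z_vertices: "\<forall>u\<in>V. Z_vertex (P u)"
    and clique: "is_clique V E X"
begin

lemma X_subset_V: "X \<subseteq> V"
  using clique unfolding is_clique_def by simp

lemma two_bend_path_X: "u \<in> X \<Longrightarrow> two_bend_path (P u)"
  using rep X_subset_V unfolding B2_rep_def by auto

lemma Z_vertex_X: "u \<in> X \<Longrightarrow> Z_vertex (P u)"
  using Z_vertices X_subset_V by auto

lemma X_arm:
  assumes "u \<in> X" "r \<in> index (P u)"
  shows "index (P u) = {r, z_other_row (P u) r}" "z_arm_end (P u) r \<noteq> z_column (P u)"
    "tproj (P u) r = mk_tint Emp (z_arm_end (P u) r) (bend_type r (z_other_row (P u) r)) (z_column (P u))"
  using Z_vertex_arm[OF two_bend_path_X[OF assms(1)] Z_vertex_X[OF assms(1)] assms(2)] by auto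

lemma X_vertices_meet:
  assumes "u \<in> X" "v \<in> X" "u \<noteq> v"
  shows "(\<exists>r \<in> index (P u) \<inter> index (P v).
            arms_overlap (z_arm_end (P u) r) (z_column (P u)) (z_arm_end (P v) r) (z_column (P v)))
       \<or> (z_column (P u) = z_column (P v) \<and>
          (\<forall>r \<in> index (P u) \<inter> index (P v).
             bend_type r (z_other_row (P u) r) = bend_type r (z_other_row (P v) r)))"
proof (rule Z_vertices_share_edge[OF two_bend_path_X Z_vertex_X two_bend_path_X Z_vertex_X])
  show "path_edges (P u) \<inter> path_edges (P v) \<noteq> {}"
    using assms rep clique X_subset_V unfolding B2_rep_def is_clique_def by blast
qed (use assms in auto)

lemma other_row_eq:
  assumes "u \<in> X" "a \<in> index (P u)" "b \<in> index (P u)" "a \<noteq> b"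
  shows "z_other_row (P u) a = b"
  using X_arm(1)[OF assms(1,2)] assms(3,4) by auto

lemma index_eq_pair:
  assumes "u \<in> X" "a \<in> index (P u)" "b \<in> index (P u)" "a \<noteq> b"
  shows "index (P u) = {a, b}"
  using X_arm(1)[OF assms(1,2)] other_row_eq[OF assms] by simp

lemma nonclique_projection_witnesses:
  assumes "\<not> proj_graph_clique P a {u \<in> X. index (P u) = {a, b}}"
  obtains u v where "u \<in> X" "v \<in> X" "index (P u) = {a, b}" "index (P v) = {a, b}" "a \<noteq> b"
    and "z_column (P u) \<noteq> z_column (P v)"
    and "\<not> arms_overlap (z_arm_end (P u) a) (z_column (P u)) (z_arm_end (P v) a) (z_column (P v))"
proof -
  obtain u v where u: "u \<in> X" "index (P u) = {a, b}" and v: "v \<in> X" "index (P v) = {a, b}"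
    and disjoint: "\<not> tintersects (tproj (P u) a) (tproj (P v) a)"
    using assms unfolding proj_graph_clique_def by blast
  have ab: "a \<noteq> b" using Z_vertex_X[OF u(1)] u(2) unfolding Z_vertex_def by auto
  have tproj: "tproj (P w) a = mk_tint Emp (z_arm_end (P w) a) (bend_type a b) (z_column (P w))"
    and nondegenerate: "z_arm_end (P w) a \<noteq> z_column (P w)"
    if "w \<in> X" "index (P w) = {a, b}" for w
    using X_arm[of w a] other_row_eq[of w a b] that ab by auto
  have "z_column (P u) \<noteq> z_column (P v)"
    using disjoint tintersects_arms_same_column tproj[OF u] tproj[OF v] nondegenerate[OF u] nondegenerate[OF v]
    unfolding bend_type_def by fastforce
  moreover have "\<not> arms_overlap (z_arm_end (P u) a) (z_column (P u)) (z_arm_end (P v) a) (z_column (P v))"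
    using disjoint tintersects_overlapping_arms tproj[OF u] tproj[OF v] nondegenerate[OF u] nondegenerate[OF v]
    by metis
  ultimately show thesis using that u v ab by blast
qed

text \<open>A vertex avoiding both rows could only meet the two witnesses on their vertical segments,
  forcing their columns to coincide.\<close>

lemma X_meets_rows:
  assumes "\<not> proj_graph_clique P a {u \<in> X. index (P u) = {a, b}}" and "w \<in> X"
  shows "a \<in> index (P w) \<or> b \<in> index (P w)"
proof (rule ccontr)
  assume avoids: "\<not> (a \<in> index (P w) \<or> b \<in> index (P w))"
  obtain u v where u: "u \<in> X" "index (P u) = {a, b}" and v: "v \<in> X" "index (P v) = {a, b}"
    and "z_column (P u) \<noteq> z_column (P v)"
    using nonclique_projection_witnesses[OF assms(1)] by metis
  moreover have "z_column (P w) = z_column (P q)" if "q \<in> X" "index (P q) = {a, b}" for q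
    using X_vertices_meet[OF assms(2) that(1)] avoids that by auto
  ultimately show False using u v by metis
qed

lemma exists_row_tint:
  assumes "\<not> proj_graph_clique P a {u \<in> X. index (P u) = {a, b}}"
  obtains t where "proper t"
    and "\<And>w. w \<in> X \<Longrightarrow> a \<in> index (P w) \<Longrightarrow> b \<notin> index (P w) \<Longrightarrow> vcontains P w a t"
    and "\<And>w. w \<in> X \<Longrightarrow> index (P w) = {a, b} \<Longrightarrow> vintersects P w a t"
proof -
  obtain u v where u: "u \<in> X" "index (P u) = {a, b}" and v: "v \<in> X" "index (P v) = {a, b}"
    and ab: "a \<noteq> b" and separated: "z_column (P u) \<noteq> z_column (P v)"
      "\<not> arms_overlap (z_arm_end (P u) a) (z_column (P u)) (z_arm_end (P v) a) (z_column (P v))"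
    using nonclique_projection_witnesses[OF assms] by metis
  define W where "W = {w \<in> X. a \<in> index (P w) \<and> b \<notin> index (P w)}"
  define Y where "Y = {w \<in> X. index (P w) = {a, b}}"
  have other_Y: "z_other_row (P y) a = b" if "y \<in> Y" for y
    using other_row_eq[of y a b] that ab unfolding Y_def by auto
  interpret row_arms W Y "\<lambda>w. z_arm_end (P w) a" "\<lambda>w. z_column (P w)"
    "\<lambda>w. bend_type a (z_other_row (P w) a)" "bend_type a b" u v
  proof
    show "finite (W \<union> Y)"
      using finite_subset[OF _ finite_V] X_subset_V unfolding W_def Y_def by auto
    show "u \<in> Y" "v \<in> Y" using u v unfolding Y_def by auto
    show "bend_type a b \<noteq> Emp" unfolding bend_type_def by simp
    show "z_arm_end (P w) a \<noteq> z_column (P w)" if "w \<in> W \<union> Y" for w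
      using X_arm(2)[of w a] that unfolding W_def Y_def by auto
    show "bend_type a (z_other_row (P y) a) = bend_type a b" if "y \<in> Y" for y
      using other_Y[OF that] by simp
    show "arms_overlap (z_arm_end (P w) a) (z_column (P w)) (z_arm_end (P y) a) (z_column (P y))
        \<or> (z_column (P w) = z_column (P y) \<and> bend_type a (z_other_row (P w) a) = bend_type a b)"
      if w: "w \<in> W" and y: "y \<in> Y" for w y
    proof -
      have "w \<in> X" "y \<in> X" "w \<noteq> y" "index (P w) \<inter> index (P y) = {a}"
        using w y unfolding W_def Y_def by auto
      then show ?thesis using X_vertices_meet[of w y] other_Y[OF y] by auto
    qed
  qed (use separated in auto)
  show thesis
  proof (rule that[OF proper_common_tint])
    show "vcontains P w a common_tint" if "w \<in> X" "a \<in> index (P w)" "b \<notin> index (P w)" for w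
      using contains_common_tint[of w] X_arm(3)[OF that(1,2)] that unfolding vcontains_def W_def by simp
    show "vintersects P w a common_tint" if "w \<in> X" "index (P w) = {a, b}" for w
      using intersects_common_tint[of w] X_arm(3)[of w a] other_Y[of w] that
      unfolding vintersects_def Y_def by simp
  qed
qed

end

theorem lemma8:
  fixes V :: "'v set" and E :: "'v \<Rightarrow> 'v \<Rightarrow> bool" and P :: "'v \<Rightarrow> point list"
    and X :: "'v set" and a b :: int
  assumes "finite V"
    and "B2_rep V E P"
    and "\<forall>u\<in>V. Z_vertex (P u)"
    and "is_clique V E X"
    and "\<not> proj_graph_clique P a {u \<in> X. index (P u) = {a, b}}"
    and "\<not> proj_graph_clique P b {u \<in> X. index (P u) = {a, b}}"
  shows "\<exists>S. good_vertex_set V P S \<and> X \<subseteq> S"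
proof -
  interpret Z_clique V E P X using assms(1-4) by unfold_locales
  have swap: "{u \<in> X. index (P u) = {b, a}} = {u \<in> X. index (P u) = {a, b}}"
    by (auto simp: insert_commute)
  obtain t\<^sub>a where t\<^sub>a: "proper t\<^sub>a"
    "\<And>w. w \<in> X \<Longrightarrow> a \<in> index (P w) \<Longrightarrow> b \<notin> index (P w) \<Longrightarrow> vcontains P w a t\<^sub>a"
    "\<And>w. w \<in> X \<Longrightarrow> index (P w) = {a, b} \<Longrightarrow> vintersects P w a t\<^sub>a"
    using exists_row_tint[OF assms(5)] by blast
  have "\<not> proj_graph_clique P b {u \<in> X. index (P u) = {b, a}}"
    using assms(6) unfolding swap .
  then obtain t\<^sub>b where t\<^sub>b: "proper t\<^sub>b"
    "\<And>w. w \<in> X \<Longrightarrow> b \<in> index (P w) \<Longrightarrow> a \<notin> index (P w) \<Longrightarrow> vcontains P w b t\<^sub>b"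
    "\<And>w. w \<in> X \<Longrightarrow> index (P w) = {b, a} \<Longrightarrow> vintersects P w b t\<^sub>b"
    using exists_row_tint by blast
  have ab: "a \<noteq> b" using nonclique_projection_witnesses[OF assms(5)] by metis
  define S where "S = {v \<in> V. vcontains P v a t\<^sub>a \<or> vcontains P v b t\<^sub>b \<or>
                              (vintersects P v a t\<^sub>a \<and> vintersects P v b t\<^sub>b)}"
  have "good_vertex_set V P S" unfolding good_vertex_set_def S_def using ab t\<^sub>a(1) t\<^sub>b(1) by blast
  moreover have "X \<subseteq> S"
  proof
    fix w assume w: "w \<in> X"
    then show "w \<in> S"
      using X_meets_rows[OF assms(5) w] index_eq_pair[OF w, of a b] index_eq_pair[OF w, of b a]
        ab t\<^sub>a t\<^sub>b X_subset_V
      unfolding S_def by blast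
  qed
  ultimately show ?thesis by blast
qed

end
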